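(* If $f\in\mathcal{U}=\mathcal{U}(1)$, then $-3\le \det T_{2,1}(f)\le 1$; and if $f\in\mathcal{U}_s=\mathcal{U}_s(1)$, then $-1\le \det T_{3,1}(f)\le 8$. All inequalities are sharp.
   Context: $\mathbb{D}=\{z\in\mathbb{C}:|z|<1\}$. $\mathcal{A}$ is the class of analytic functions $f$ on $\mathbb{D}$ with $f(0)=0$, $f'(0)=1$, written $f(z)=z+a_2z^2+a_3z^3+\cdots$. $\mathcal{U}(1)=\{f\in\mathcal{A}: |(z/f(z))^2f'(z)-1|<1 \text{ for all } z\in\mathbb{D}\}$ and $\mathcal{U}_s(1)=\{f\in\mathcal{U}(1): \frac{f(z)}{z}\prec\frac{1}{(1+z)^2}\}$, where $g\prec h$ means $g=h\circ\omega$ for some analytic $\omega:\mathbb{D}\to\mathbb{D}$ with $\omega(0)=0$. For $f\in\mathcal{A}$, $\det T_{2,1}(f)=1-|a_2|^2$ and $\det T_{3,1}(f)=2\,\mathrm{Re}(a_2^2\overline{a_3})-2|a_2|^2-|a_3|^2+1$ (determinants of the Hermitian Toeplitz matrices $\begin{pmatrix}1&a_2\\ \overline{a_2}&1\end{pmatrix}$ and $\begin{pmatrix}1&a_2&a_3\\ \overline{a_2}&1&a_2\\ \overline{a_3}&\overline{a_2}&1\end{pmatrix}$; real, possibly negative). *)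

theory Defs
  imports "HOL-Complex_Analysis.Complex_Analysis"
begin

abbreviation unit_disk :: "complex set" where
  "unit_disk \<equiv> ball 0 1"

definition classA :: "(complex \<Rightarrow> complex) \<Rightarrow> bool" where
  "classA f \<longleftrightarrow> f holomorphic_on unit_disk \<and> f 0 = 0 \<and> deriv f 0 = 1"

definition coeff :: "(complex \<Rightarrow> complex) \<Rightarrow> nat \<Rightarrow> complex" where
  "coeff f n = (deriv ^^ n) f 0 / of_nat (fact n)"

text \<open>Class U(1). The quotient z/f(z) must be meaningful, so f(z) is nonzero for
  z nonzero; at z = 0 the (removable) expression equals 0 automatically.\<close>
definition classU1 :: "(complex \<Rightarrow> complex) \<Rightarrow> bool" where
  "classU1 f \<longleftrightarrow> classA f \<and>
     (\<forall>z\<in>unit_disk. z \<noteq> 0 \<longrightarrow> f z \<noteq> 0 \<and> cmod ((z / f z)^2 * deriv f z - 1) < 1)"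

definition subordinate :: "(complex \<Rightarrow> complex) \<Rightarrow> (complex \<Rightarrow> complex) \<Rightarrow> bool" where
  "subordinate g h \<longleftrightarrow> (\<exists>\<omega>. \<omega> holomorphic_on unit_disk \<and> \<omega> ` unit_disk \<subseteq> unit_disk \<and>
      \<omega> 0 = 0 \<and> (\<forall>z\<in>unit_disk. g z = h (\<omega> z)))"

definition quot :: "(complex \<Rightarrow> complex) \<Rightarrow> complex \<Rightarrow> complex" where
  "quot f z = (if z = 0 then 1 else f z / z)"

definition classUs1 :: "(complex \<Rightarrow> complex) \<Rightarrow> bool" where
  "classUs1 f \<longleftrightarrow> classU1 f \<and> subordinate (quot f) (\<lambda>z. 1 / (1 + z)^2)"

definition detT21 :: "(complex \<Rightarrow> complex) \<Rightarrow> real" where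
  "detT21 f = 1 - (cmod (coeff f 2))^2"

definition detT31 :: "(complex \<Rightarrow> complex) \<Rightarrow> real" where
  "detT31 f = 2 * Re ((coeff f 2)^2 * cnj (coeff f 3)) - 2 * (cmod (coeff f 2))^2
              - (cmod (coeff f 3))^2 + 1"

end

theory Submission
  imports Defs
begin

text \<open>Write \<open>f(z) = z / g(z)\<close> with \<open>g = 1 + b\<^sub>1 z + b\<^sub>2 z\<^sup>2 + \<dots>\<close> zero-free.
  Then \<open>(z/f)\<^sup>2 f' - 1 = g - z g' - 1\<close> maps the disk into itself and vanishes to second
  order at \<open>0\<close>, so by Schwarz's lemma it is bounded by \<open>|z|\<^sup>2\<close> and \<open>|b\<^sub>2| \<le> 1\<close>. Its size
  is that of \<open>z\<^sup>2 h'(z)\<close> for \<open>h(z) = (g(z) - 1)/z\<close>, so \<open>h\<close> is 1-Lipschitz with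
  \<open>h(0) = b\<^sub>1\<close>; if \<open>|b\<^sub>1| > 2\<close>, Brouwer's theorem applied to \<open>-1/h\<close> on a small disk produces
  a zero of \<open>g = 1 + z h\<close>. Hence \<open>|a\<^sub>2| = |b\<^sub>1| \<le> 2\<close>, which is the bound on \<open>det T\<^sub>2\<^sub>,\<^sub>1\<close>.

  For \<open>f \<in> U\<^sub>s\<close> we have \<open>g = (1 + \<omega>)\<^sup>2\<close> with \<open>\<omega> = c\<^sub>1 z + c\<^sub>2 z\<^sup>2 + \<dots>\<close> a Schwarz function,
  so \<open>a\<^sub>2 = -2 c\<^sub>1\<close> and \<open>a\<^sub>2\<^sup>2 - a\<^sub>3 = b\<^sub>2 = c\<^sub>1\<^sup>2 + 2 c\<^sub>2\<close>. Since
  \<open>det T\<^sub>3\<^sub>,\<^sub>1 = (1 - |a\<^sub>2|\<^sup>2)\<^sup>2 - |a\<^sub>2\<^sup>2 - a\<^sub>3|\<^sup>2\<close>, the bounds \<open>|c\<^sub>1| \<le> 1\<close>, \<open>|c\<^sub>2| \<le> 1 - |c\<^sub>1|\<^sup>2\<close>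
  (Schwarz--Pick) and \<open>|b\<^sub>2| \<le> 1\<close> reduce both inequalities to estimates in \<open>t = |c\<^sub>1|\<^sup>2\<close>.
  Equality is attained by \<open>z/(1-z)\<^sup>2\<close>, \<open>z\<close>, \<open>z/(1-z+z\<^sup>2)\<close> and \<open>z/(1+z)\<^sup>2\<close>.\<close>

lemma deriv_cong_open:
  assumes "open S" "z \<in> S" "\<And>x. x \<in> S \<Longrightarrow> f x = g x"
  shows "deriv f z = deriv g z"
  by (rule deriv_cong_ev) (use assms in \<open>auto simp: eventually_nhds\<close>)

lemma higher_deriv_cong_open:
  assumes "open S" "z \<in> S" "\<And>x. x \<in> S \<Longrightarrow> f x = g x"
  shows "(deriv ^^ n) f z = (deriv ^^ n) g z"
  by (rule higher_deriv_cong_ev) (use assms in \<open>auto simp: eventually_nhds\<close>)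

lemma higher_deriv_2_const_plus_ident_mult:
  assumes holp: "p holomorphic_on S" and S: "open S" "z \<in> S"
  shows "(deriv ^^ 2) (\<lambda>w. c + w * p w) z = 2 * deriv p z + z * (deriv ^^ 2) p z"
proof -
  have "(deriv ^^ 2) (\<lambda>w. c + w * p w) z = (deriv ^^ 2) (\<lambda>w. c) z + (deriv ^^ 2) (\<lambda>w. w * p w) z"
    using holp S by (intro higher_deriv_add) (auto intro!: holomorphic_intros)
  also have "\<dots> = 2 * deriv p z + z * (deriv ^^ 2) p z"
    using higher_deriv_mult[where f="\<lambda>w. w" and g=p and n=2, OF _ holp S]
    by (simp add: higher_deriv_const numeral_2_eq_2)
  finally show ?thesis .
qed

lemma holomorphic_factor_at_0:
  assumes holf: "f holomorphic_on S" and S: "open S" "0 \<in> S"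
  obtains p where "p holomorphic_on S" "p 0 = deriv f 0" "\<And>z. f z = f 0 + z * p z"
proof
  define p where "p = (\<lambda>z. if z = 0 then deriv f 0 else (f z - f 0) / (z - 0))"
  show "p holomorphic_on S" unfolding p_def by (rule pole_lemma_open[OF holf S(1)])
  show "p 0 = deriv f 0" by (simp add: p_def)
  show "f z = f 0 + z * p z" for z by (simp add: p_def)
qed

lemma Schwarz_factor:
  assumes holf: "f holomorphic_on ball 0 1" and f0: "f 0 = 0"
    and fD: "\<And>z. norm z < 1 \<Longrightarrow> norm (f z) < 1" and f'0: "norm (deriv f 0) < 1"
  obtains p where "p holomorphic_on ball 0 1" "p 0 = deriv f 0"
    "\<And>z. norm z < 1 \<Longrightarrow> norm (p z) < 1" "\<And>z. f z = z * p z"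
proof -
  obtain p where holp: "p holomorphic_on ball 0 1" and p0: "p 0 = deriv f 0"
    and fp: "\<And>z. f z = z * p z"
    using holomorphic_factor_at_0[OF holf] f0 by auto
  have "norm (p z) < 1" if z: "norm z < 1" for z
  proof (cases "z = 0")
    case False
    have "norm (f z) \<noteq> norm z"
    proof
      assume "norm (f z) = norm z"
      then obtain \<alpha> where \<alpha>: "\<And>z. norm z < 1 \<Longrightarrow> f z = \<alpha> * z" "norm \<alpha> = 1"
        using Schwarz_Lemma(3)[OF holf f0 fD z] False z by force
      have "deriv f 0 = deriv (\<lambda>z. \<alpha> * z) 0"
        by (rule deriv_cong_open[of "ball 0 1"]) (auto simp: \<alpha>)
      then show False using f'0 \<alpha>(2) by simp
    qed
    with Schwarz_Lemma(1)[OF holf f0 fD z] have "norm (f z) < norm z" by simp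
    then show ?thesis using False by (simp add: fp norm_mult)
  qed (use f'0 p0 in simp)
  with holp p0 fp show thesis using that by blast
qed

lemma Schwarz_double_zero:
  assumes holf: "f holomorphic_on ball 0 1" and f0: "f 0 = 0" and f'0: "deriv f 0 = 0"
    and fD: "\<And>z. norm z < 1 \<Longrightarrow> norm (f z) < 1"
  shows "\<And>z. norm z < 1 \<Longrightarrow> norm (f z) \<le> (norm z)^2"
    and "norm ((deriv ^^ 2) f 0) \<le> 2"
proof -
  have "norm (deriv f 0) < 1" using f'0 by simp
  then obtain p where holp: "p holomorphic_on ball 0 1" and p0': "p 0 = deriv f 0"
    and pD: "\<And>z. norm z < 1 \<Longrightarrow> norm (p z) < 1" and fp: "\<And>z. f z = z * p z"
    using Schwarz_factor[OF holf f0 fD] by blast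
  have p0: "p 0 = 0" using p0' f'0 by simp
  have feq: "f = (\<lambda>z. 0 + z * p z)" using fp by (simp add: fun_eq_iff)
  have "(deriv ^^ 2) f 0 = 2 * deriv p 0"
    unfolding feq using higher_deriv_2_const_plus_ident_mult[OF holp, of 0 0] by simp
  then show "norm ((deriv ^^ 2) f 0) \<le> 2"
    using Schwarz_Lemma(2)[OF holp p0 pD, of 0] by (simp add: norm_mult)
  show "norm (f z) \<le> (norm z)^2" if "norm z < 1" for z
    using Schwarz_Lemma(1)[OF holp p0 pD that]
    by (simp add: fp norm_mult power2_eq_square mult_left_mono)
qed

lemma norm_moebius_lt_1:
  fixes a b :: complex
  assumes "norm a < 1" "norm b < 1"
  shows "norm ((a - b) / (1 - cnj b * a)) < 1"
proof -
  have ident: "(norm (1 - cnj b * a))^2 - (norm (a - b))^2 = (1 - (norm a)^2) * (1 - (norm b)^2)"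
    by (simp only: cmod_power2) (simp add: power2_eq_square algebra_simps)
  have "(1 - (norm a)^2) * (1 - (norm b)^2) > 0"
    using assms by (intro mult_pos_pos) (auto simp: abs_square_less_1)
  then have "(norm (a - b))^2 < (norm (1 - cnj b * a))^2" using ident by linarith
  then have "norm (a - b) < norm (1 - cnj b * a)" by (rule power2_less_imp_less) simp
  then show ?thesis by (simp add: norm_divide divide_less_eq)
qed

lemma Schwarz_Pick_deriv_0:
  assumes holp: "p holomorphic_on ball 0 1" and pD: "\<And>z. norm z < 1 \<Longrightarrow> norm (p z) < 1"
  shows "norm (deriv p 0) \<le> 1 - (norm (p 0))^2"
proof -
  define c where "c = p 0"
  have c1: "norm c < 1" using pD[of 0] by (simp add: c_def)
  have den: "1 - cnj c * p z \<noteq> 0" if "norm z < 1" for z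
  proof
    assume "1 - cnj c * p z = 0"
    then have "norm (cnj c * p z) = 1" by (metis eq_iff_diff_eq_0 norm_one)
    moreover have "norm (cnj c * p z) < 1"
      using c1 pD[OF that] by (simp add: norm_mult) (metis mult_strict_mono' norm_ge_zero mult_1_left)
    ultimately show False by simp
  qed
  define q where "q = (\<lambda>z. (p z - c) / (1 - cnj c * p z))"
  have holq: "q holomorphic_on ball 0 1" unfolding q_def using holp den by (auto intro!: holomorphic_intros)
  have q0: "q 0 = 0" by (simp add: q_def c_def)
  have qD: "norm (q z) < 1" if "norm z < 1" for z
    unfolding q_def by (rule norm_moebius_lt_1[OF pD[OF that] c1])
  have cc: "1 - cnj c * c = of_real (1 - (norm c)^2)"
    by (simp only: of_real_diff of_real_1 complex_norm_square mult.commute)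
  have pos: "1 - (norm c)^2 > 0" using c1 by (simp add: abs_square_less_1)
  have "(q has_field_derivative deriv p 0 / (1 - cnj c * c)) (at 0)"
  proof -
    have dp: "(p has_field_derivative deriv p 0) (at 0)"
      by (rule holomorphic_derivI[OF holp]) auto
    have "(q has_field_derivative ((deriv p 0 - 0) * (1 - cnj c * p 0) - (p 0 - c) * (0 - cnj c * deriv p 0))
        / ((1 - cnj c * p 0) * (1 - cnj c * p 0))) (at 0)"
      unfolding q_def using den[of 0]
      by (intro DERIV_divide DERIV_diff DERIV_cmult dp DERIV_const) auto
    moreover have "1 - cnj c * c \<noteq> 0" using den[of 0] by (simp add: c_def)
    ultimately show ?thesis by (simp add: c_def)
  qed
  then have "deriv q 0 = deriv p 0 / of_real (1 - (norm c)^2)"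
    unfolding cc by (rule DERIV_imp_deriv)
  then have "norm (deriv q 0) = norm (deriv p 0) / (1 - (norm c)^2)"
    by (simp only: norm_divide norm_of_real abs_of_pos[OF pos])
  moreover have "norm (deriv q 0) \<le> 1" using Schwarz_Lemma(2)[OF holq q0 qD, of 0] by simp
  ultimately show ?thesis using pos by (simp add: c_def divide_le_eq)
qed

lemma self_map_second_coeff_bound:
  assumes holw: "w holomorphic_on ball 0 1" and w0: "w 0 = 0"
    and wD: "\<And>z. norm z < 1 \<Longrightarrow> norm (w z) < 1"
  shows "norm ((deriv ^^ 2) w 0 / 2) \<le> 1 - (norm (deriv w 0))^2"
proof (cases "norm (deriv w 0) = 1")
  case True
  then obtain \<alpha> where \<alpha>: "\<And>z. norm z < 1 \<Longrightarrow> w z = \<alpha> * z"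
    using Schwarz_Lemma(3)[OF holw w0 wD, of 0] by auto
  have "(deriv ^^ 2) w 0 = (deriv ^^ 2) (\<lambda>z. \<alpha> * z) 0"
    by (rule higher_deriv_cong_open[of "ball 0 1"]) (auto simp: \<alpha>)
  then show ?thesis using True by (simp add: numeral_2_eq_2)
next
  case False
  then have "norm (deriv w 0) < 1" using Schwarz_Lemma(2)[OF holw w0 wD, of 0] by simp
  then obtain p where holp: "p holomorphic_on ball 0 1" and p0: "p 0 = deriv w 0"
    and pD: "\<And>z. norm z < 1 \<Longrightarrow> norm (p z) < 1" and wp: "\<And>z. w z = z * p z"
    using Schwarz_factor[OF holw w0 wD] by blast
  have weq: "w = (\<lambda>z. 0 + z * p z)" using wp by (simp add: fun_eq_iff)
  have "(deriv ^^ 2) w 0 / 2 = deriv p 0"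
    unfolding weq using higher_deriv_2_const_plus_ident_mult[OF holp, of 0 0] by simp
  then show ?thesis using Schwarz_Pick_deriv_0[OF holp pD] p0 by simp
qed

lemma coeff_ident_div:
  assumes holg: "g holomorphic_on S" and S: "open S" "0 \<in> S"
    and nz: "\<And>z. z \<in> S \<Longrightarrow> g z \<noteq> 0" and g0: "g 0 = 1"
    and fg: "\<And>z. z \<in> S \<Longrightarrow> f z = z / g z"
  shows "coeff f 2 = - deriv g 0" and "coeff f 3 = (deriv g 0)^2 - (deriv ^^ 2) g 0 / 2"
proof -
  define H where "H = (\<lambda>z. inverse (g z))"
  have holH: "H holomorphic_on S" unfolding H_def using holg nz by (auto intro!: holomorphic_intros)
  have fH: "(deriv ^^ n) f 0 = (deriv ^^ n) (\<lambda>w. w * H w) 0" for n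
    by (rule higher_deriv_cong_open[OF S]) (simp add: fg H_def divide_inverse)
  have d2f: "(deriv ^^ 2) f 0 = 2 * deriv H 0"
    unfolding fH using higher_deriv_mult[where f="\<lambda>w. w" and g=H and n=2, OF _ holH S]
    by (simp add: numeral_2_eq_2)
  have d3f: "(deriv ^^ 3) f 0 = 3 * (deriv ^^ 2) H 0"
    unfolding fH using higher_deriv_mult[where f="\<lambda>w. w" and g=H and n=3, OF _ holH S]
    by (simp add: numeral_3_eq_3 numeral_2_eq_2)
  have dH: "deriv H z = - deriv g z / (g z)^2" if "z \<in> S" for z
  proof -
    have "(g has_field_derivative deriv g z) (at z)"
      using holg S(1) that by (rule holomorphic_derivI)
    then have "(H has_field_derivative - (deriv g z * inverse (g z ^ 2))) (at z)"
      unfolding H_def using DERIV_inverse_fun[of g, where s=UNIV] nz[OF that]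
      by (simp add: numeral_2_eq_2)
    then show ?thesis by (simp add: DERIV_imp_deriv divide_inverse)
  qed
  have d2H: "(deriv ^^ 2) H 0 = - (deriv ^^ 2) g 0 + 2 * (deriv g 0)^2"
  proof -
    have holg': "deriv g holomorphic_on S" using holg S(1) by (rule holomorphic_deriv)
    have dg: "(g has_field_derivative deriv g 0) (at 0)"
      using holg S by (rule holomorphic_derivI)
    have d2g: "(deriv g has_field_derivative deriv (deriv g) 0) (at 0)"
      using holg' S by (rule holomorphic_derivI)
    have "(deriv ^^ 2) H 0 = deriv (deriv H) 0" by (simp add: numeral_2_eq_2)
    also have "\<dots> = deriv (\<lambda>z. - deriv g z / (g z)^2) 0"
      by (rule deriv_cong_open[OF S]) (simp add: dH)
    also have "\<dots> = - (deriv ^^ 2) g 0 + 2 * (deriv g 0)^2"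
      using DERIV_divide[OF DERIV_minus[OF d2g] DERIV_power[OF dg, of 2]] g0
      by (intro DERIV_imp_deriv) (simp add: numeral_2_eq_2 algebra_simps)
    finally show ?thesis .
  qed
  show "coeff f 2 = - deriv g 0" unfolding coeff_def d2f using dH[OF S(2)] g0 by simp
  show "coeff f 3 = (deriv g 0)^2 - (deriv ^^ 2) g 0 / 2" unfolding coeff_def d3f d2H
    by (simp add: fact_numeral field_simps)
qed

lemma U1_expression_reciprocal:
  assumes holg: "g holomorphic_on S" and "open S" and nz: "\<And>z. z \<in> S \<Longrightarrow> g z \<noteq> 0"
    and fg: "\<And>z. z \<in> S \<Longrightarrow> f z = z / g z" and z: "z \<in> S" "z \<noteq> 0"
  shows "(z / f z)^2 * deriv f z - 1 = g z - z * deriv g z - 1"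
proof -
  have dg: "(g has_field_derivative deriv g z) (at z)"
    using holg \<open>open S\<close> z(1) by (rule holomorphic_derivI)
  have "deriv f z = deriv (\<lambda>z. z / g z) z"
    by (rule deriv_cong_open[OF \<open>open S\<close> z(1)]) (simp add: fg)
  also have "\<dots> = (g z - z * deriv g z) / (g z)^2"
    using DERIV_divide[OF DERIV_ident dg] nz[OF z(1)]
    by (intro DERIV_imp_deriv) (simp add: power2_eq_square)
  moreover have "z / f z = g z" using fg[OF z(1)] z(2) nz[OF z(1)] by simp
  ultimately show ?thesis using nz[OF z(1)] by (simp add: field_simps)
qed

lemma has_field_derivative_U1_defect:
  assumes holg: "g holomorphic_on S" and "open S" "z \<in> S"
  shows "((\<lambda>z. g z - z * deriv g z - 1) has_field_derivative - z * (deriv ^^ 2) g z) (at z)"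
proof -
  have holg': "deriv g holomorphic_on S" using holg \<open>open S\<close> by (rule holomorphic_deriv)
  have dg: "(g has_field_derivative deriv g z) (at z)"
    using holg assms(2,3) by (rule holomorphic_derivI)
  have d2g: "(deriv g has_field_derivative deriv (deriv g) z) (at z)"
    using holg' assms(2,3) by (rule holomorphic_derivI)
  show ?thesis
    using DERIV_diff[OF DERIV_diff[OF dg DERIV_mult[OF DERIV_ident d2g]] DERIV_const[of 1]]
    by (simp add: numeral_2_eq_2 algebra_simps)
qed

lemma U1_defect_bounds:
  assumes holg: "g holomorphic_on ball 0 1" and g0: "g 0 = 1"
    and W: "\<And>z. norm z < 1 \<Longrightarrow> norm (g z - z * deriv g z - 1) < 1"
  shows "\<And>z. norm z < 1 \<Longrightarrow> norm (g z - z * deriv g z - 1) \<le> (norm z)^2"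
    and "norm ((deriv ^^ 2) g 0) \<le> 2"
proof -
  define D where "D = (\<lambda>z. g z - z * deriv g z - 1)"
  have dD: "deriv D z = - z * (deriv ^^ 2) g z" if "norm z < 1" for z
    unfolding D_def using has_field_derivative_U1_defect[OF holg] that
    by (intro DERIV_imp_deriv) auto
  have holD: "D holomorphic_on ball 0 1"
    unfolding D_def using holg by (auto intro!: holomorphic_intros holomorphic_deriv)
  have D0: "D 0 = 0" "deriv D 0 = 0" using g0 dD[of 0] by (auto simp: D_def)
  note Schwarz = Schwarz_double_zero[OF holD D0, unfolded D_def, OF W]
  show "norm (g z - z * deriv g z - 1) \<le> (norm z)^2" if "norm z < 1" for z
    using Schwarz(1) that by blast
  have holg2: "(deriv ^^ 2) g holomorphic_on ball 0 1"
    using holg by (rule holomorphic_higher_deriv) auto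
  have "(deriv ^^ 2) D 0 = deriv (deriv D) 0" by (simp add: numeral_2_eq_2)
  also have "\<dots> = deriv (\<lambda>z. - z * (deriv ^^ 2) g z) 0"
    by (rule deriv_cong_open[of "ball 0 1"]) (auto simp: dD)
  also have "\<dots> = - (deriv ^^ 2) g 0"
    using DERIV_mult[OF DERIV_minus[OF DERIV_ident] holomorphic_derivI[OF holg2, of 0]]
    by (intro DERIV_imp_deriv) simp
  finally show "norm ((deriv ^^ 2) g 0) \<le> 2" using Schwarz(2) by (simp add: D_def)
qed

lemma one_plus_mult_has_zero:
  fixes c :: complex
  assumes conth: "continuous_on (ball 0 1) h"
    and near: "\<And>z. norm z < 1 \<Longrightarrow> norm (h z - c) \<le> norm z" and c: "norm c > 2"
  obtains z where "norm z < 1" "1 + z * h z = 0"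
proof -
  \<comment> \<open>\<open>r (|c| - r) \<ge> 1\<close> exactly when \<open>|c| \<ge> 2\<close>, so \<open>-1/h\<close> maps the closed \<open>r\<close>-disk into itself.\<close>
  define r where "r = 1 / (norm c - 1)"
  have r: "0 < r" "r < 1" using c by (auto simp: r_def field_simps)
  have pos: "norm c - r > 0" using c r by simp
  have inv_le: "1 / (norm c - r) \<le> r"
    using c pos unfolding r_def by (simp add: field_simps)
  have lowb: "norm c - r \<le> norm (h z)" if "z \<in> cball 0 r" for z
    using near[of z] norm_triangle_ineq2[of c "h z"] that r by (auto simp: norm_minus_commute)
  obtain z where z: "z \<in> cball 0 r" "- 1 / h z = z"
  proof (rule brouwer_ball[OF r(1)])
    have "continuous_on (cball 0 r) h"
      using r by (intro continuous_on_subset[OF conth]) auto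
    then show "continuous_on (cball 0 r) (\<lambda>z. - 1 / h z)"
      using lowb pos by (intro continuous_intros) force+
    show "(\<lambda>z. - 1 / h z) \<in> cball 0 r \<rightarrow> cball 0 r"
    proof
      fix x :: complex assume x: "x \<in> cball 0 r"
      have "norm (- 1 / h x) \<le> 1 / (norm c - r)"
        using lowb[OF x] pos by (simp add: norm_divide frac_le)
      then show "- 1 / h x \<in> cball 0 r" using inv_le by simp
    qed
  qed
  have "h z \<noteq> 0" using lowb[OF z(1)] pos by auto
  then have "z * h z = - 1" using z(2) by (auto simp: field_simps)
  then have "1 + z * h z = 0" by simp
  moreover have "norm z < 1" using z(1) r by simp
  ultimately show thesis by (rule that[rotated])
qed

lemma U1_reciprocal_deriv_0_bound:
  assumes holg: "g holomorphic_on ball 0 1" and nz: "\<And>z. norm z < 1 \<Longrightarrow> g z \<noteq> 0"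
    and g0: "g 0 = 1" and W: "\<And>z. norm z < 1 \<Longrightarrow> norm (g z - z * deriv g z - 1) < 1"
  shows "norm (deriv g 0) \<le> 2"
proof (rule ccontr)
  assume big: "\<not> norm (deriv g 0) \<le> 2"
  obtain h where holh: "h holomorphic_on ball 0 1" and h0: "h 0 = deriv g 0"
    and gh: "\<And>z. g z = 1 + z * h z"
    using holomorphic_factor_at_0[OF holg] g0 by auto
  have dh: "norm (deriv h z) \<le> 1" if z: "norm z < 1" for z
  proof (cases "z = 0")
    case True
    have geq: "g = (\<lambda>z. 1 + z * h z)" using gh by (simp add: fun_eq_iff)
    have "(deriv ^^ 2) g 0 = 2 * deriv h 0"
      unfolding geq using higher_deriv_2_const_plus_ident_mult[OF holh, of 0 1] by simp
    then show ?thesis using U1_defect_bounds(2)[OF holg g0 W] True by (simp add: norm_mult)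
  next
    case False
    have dg: "(g has_field_derivative deriv g z) (at z)"
      using holg z by (intro holomorphic_derivI[of _ "ball 0 1"]) auto
    have "deriv h z = deriv (\<lambda>w. (g w - 1) / w) z"
      by (rule deriv_cong_open[of "ball 0 1 - {0}"]) (use z False in \<open>auto simp: gh\<close>)
    also have "\<dots> = - (g z - z * deriv g z - 1) / z^2"
      using DERIV_divide[OF DERIV_diff[OF dg DERIV_const[of 1]] DERIV_ident] False
      by (intro DERIV_imp_deriv) (simp add: power2_eq_square field_simps)
    finally have "norm (deriv h z) = norm (g z - z * deriv g z - 1) / (norm z)^2"
      by (simp only: norm_divide norm_power norm_minus_cancel)
    also have "\<dots> \<le> 1"
      using U1_defect_bounds(1)[OF holg g0 W z] False by (simp add: divide_le_eq)
    finally show ?thesis .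
  qed
  have near: "norm (h z - deriv g 0) \<le> norm z" if "norm z < 1" for z
  proof -
    have "norm (h z - h 0) \<le> 1 * norm (z - 0)"
    proof (rule field_differentiable_bound[of "ball 0 1"])
      show "(h has_field_derivative deriv h w) (at w within ball 0 1)" if "w \<in> ball 0 1" for w
        using holh that by (intro holomorphic_derivI) auto
    qed (use dh that in auto)
    then show ?thesis by (simp add: h0)
  qed
  have "continuous_on (ball 0 1) h" using holh by (rule holomorphic_on_imp_continuous_on)
  then obtain z where "norm z < 1" "1 + z * h z = 0"
    using one_plus_mult_has_zero near big by force
  then show False using nz gh by metis
qed

lemma classU1_reciprocal:
  assumes "classU1 f" and g_eq: "\<And>z. g z = inverse (quot f z)"
  shows "g holomorphic_on ball 0 1" and "\<And>z. norm z < 1 \<Longrightarrow> g z \<noteq> 0" and "g 0 = 1"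
    and "\<And>z. norm z < 1 \<Longrightarrow> f z = z / g z"
    and "\<And>z. norm z < 1 \<Longrightarrow> norm (g z - z * deriv g z - 1) < 1"
proof -
  have holf: "f holomorphic_on ball 0 1" and f0: "f 0 = 0" and f'0: "deriv f 0 = 1"
    and U: "\<And>z. norm z < 1 \<Longrightarrow> z \<noteq> 0 \<Longrightarrow> f z \<noteq> 0 \<and> norm ((z / f z)^2 * deriv f z - 1) < 1"
    using assms(1) by (auto simp: classU1_def classA_def)
  have "quot f = (\<lambda>z. if z = 0 then deriv f 0 else (f z - f 0) / (z - 0))"
    using f0 f'0 by (auto simp: quot_def fun_eq_iff)
  then have holq: "quot f holomorphic_on ball 0 1" using pole_lemma_open[OF holf] by simp
  show nz: "g z \<noteq> 0" if "norm z < 1" for z using U[OF that] by (auto simp: g_eq quot_def)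
  then show holg: "g holomorphic_on ball 0 1"
    unfolding g_eq[abs_def] using holq by (auto intro!: holomorphic_intros)
  show g0: "g 0 = 1" by (simp add: g_eq quot_def)
  show fg: "f z = z / g z" if "norm z < 1" for z using f0 by (simp add: g_eq quot_def)
  show "norm (g z - z * deriv g z - 1) < 1" if z: "norm z < 1" for z
  proof (cases "z = 0")
    case False
    then show ?thesis
      using U[OF z False] U1_expression_reciprocal[OF holg _ _ fg, of z] nz z by auto
  qed (simp add: g0)
qed

lemma classU1_coeff_2_bound:
  assumes "classU1 f"
  shows "norm (coeff f 2) \<le> 2"
proof -
  define g where "g z = inverse (quot f z)" for z
  note G = classU1_reciprocal[OF assms g_def]
  have "coeff f 2 = - deriv g 0"
    by (rule coeff_ident_div(1)[of g "ball 0 1"]) (use G in auto)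
  then show ?thesis using U1_reciprocal_deriv_0_bound[OF G(1,2,3,5)] by simp
qed

lemma classU1_detT21_bounds:
  assumes "classU1 f"
  shows "-3 \<le> detT21 f \<and> detT21 f \<le> 1"
proof -
  have "(norm (coeff f 2))^2 \<le> 2^2"
    using classU1_coeff_2_bound[OF assms] by (intro power_mono) auto
  then show ?thesis by (simp add: detT21_def)
qed

lemma higher_derivs_one_plus_square:
  assumes holw: "w holomorphic_on S" and S: "open S" "0 \<in> S" and w0: "w 0 = 0"
    and gw: "\<And>z. z \<in> S \<Longrightarrow> g z = (1 + w z)^2"
  shows "deriv g 0 = 2 * deriv w 0"
    and "(deriv ^^ 2) g 0 = 2 * (deriv w 0)^2 + 2 * (deriv ^^ 2) w 0"
proof -
  have holw': "deriv w holomorphic_on S" using holw S(1) by (rule holomorphic_deriv)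
  have dg: "deriv g z = 2 * (1 + w z) * deriv w z" if z: "z \<in> S" for z
  proof -
    have dw: "(w has_field_derivative deriv w z) (at z)"
      using holw S(1) z by (rule holomorphic_derivI)
    have "deriv g z = deriv (\<lambda>z. (1 + w z)^2) z" by (rule deriv_cong_open[OF S(1) z]) (simp add: gw)
    also have "\<dots> = 2 * (1 + w z) * deriv w z"
      using DERIV_power[OF DERIV_add[OF DERIV_const[of 1] dw], of 2]
      by (intro DERIV_imp_deriv) (simp add: algebra_simps)
    finally show ?thesis .
  qed
  show "deriv g 0 = 2 * deriv w 0" using dg[OF S(2)] w0 by simp
  have dw: "(w has_field_derivative deriv w 0) (at 0)"
    using holw S by (rule holomorphic_derivI)
  have d2w: "(deriv w has_field_derivative deriv (deriv w) 0) (at 0)"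
    using holw' S by (rule holomorphic_derivI)
  have "(deriv ^^ 2) g 0 = deriv (deriv g) 0" by (simp add: numeral_2_eq_2)
  also have "\<dots> = deriv (\<lambda>z. 2 * (1 + w z) * deriv w z) 0"
    by (rule deriv_cong_open[OF S]) (simp add: dg)
  also have "\<dots> = 2 * (deriv w 0)^2 + 2 * (deriv ^^ 2) w 0"
    using DERIV_mult[OF DERIV_cmult[OF DERIV_add[OF DERIV_const[of 1] dw], where c=2] d2w] w0
    by (intro DERIV_imp_deriv) (simp add: numeral_2_eq_2 algebra_simps power2_eq_square)
  finally show "(deriv ^^ 2) g 0 = 2 * (deriv w 0)^2 + 2 * (deriv ^^ 2) w 0" .
qed

lemma classUs1_coeffs:
  assumes "classUs1 f"
  obtains c1 c2 where "norm c1 \<le> 1" "norm c2 \<le> 1 - (norm c1)^2" "norm (c1^2 + 2 * c2) \<le> 1"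
    "coeff f 2 = -2 * c1" "coeff f 3 = 3 * c1^2 - 2 * c2"
proof -
  have fU: "classU1 f" using assms by (simp add: classUs1_def)
  obtain w where holw: "w holomorphic_on ball 0 1" and wD: "w ` ball 0 1 \<subseteq> ball 0 1"
    and w0: "w 0 = 0" and qw: "\<And>z. z \<in> ball 0 1 \<Longrightarrow> quot f z = 1 / (1 + w z)^2"
    using assms by (auto simp: classUs1_def subordinate_def)
  have wD': "norm (w z) < 1" if "norm z < 1" for z using wD that by (auto simp: image_subset_iff)
  define g where "g z = inverse (quot f z)" for z
  note G = classU1_reciprocal[OF fU g_def]
  have "g z = (1 + w z)^2" if "z \<in> ball 0 1" for z using qw[OF that] by (simp add: g_def)
  note gw = higher_derivs_one_plus_square[OF holw open_ball _ w0 this, simplified]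
  have a: "coeff f 2 = - deriv g 0" "coeff f 3 = (deriv g 0)^2 - (deriv ^^ 2) g 0 / 2"
    using coeff_ident_div[of g "ball 0 1" f] G by auto
  define c1 where "c1 = deriv w 0"
  define c2 where "c2 = (deriv ^^ 2) w 0 / 2"
  show thesis
  proof (rule that)
    show "norm c1 \<le> 1" using Schwarz_Lemma(2)[OF holw w0 wD', of 0] by (simp add: c1_def)
    show "norm c2 \<le> 1 - (norm c1)^2"
      using self_map_second_coeff_bound[OF holw w0 wD'] by (simp add: c1_def c2_def)
    have "(deriv ^^ 2) g 0 = 2 * (c1^2 + 2 * c2)" using gw(2) by (simp add: c1_def c2_def)
    then have "norm (2 * (c1^2 + 2 * c2)) \<le> 2"
      using U1_defect_bounds(2)[OF G(1,3,5)] by (simp only:)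
    then show "norm (c1^2 + 2 * c2) \<le> 1" by (simp only: norm_mult) simp
    show "coeff f 2 = -2 * c1" by (simp add: a gw c1_def)
    show "coeff f 3 = 3 * c1^2 - 2 * c2"
      by (simp add: a gw c1_def c2_def power2_eq_square field_simps)
  qed
qed

lemma detT31_eq:
  "detT31 f = (1 - (norm (coeff f 2))^2)^2 - (norm ((coeff f 2)^2 - coeff f 3))^2"
  unfolding detT31_def by (simp only: cmod_power2) (simp add: power2_eq_square algebra_simps)

lemma detT31_bounds_Schwarz_coeffs:
  fixes c1 c2 :: complex
  assumes c1: "norm c1 \<le> 1" and c2: "norm c2 \<le> 1 - (norm c1)^2"
    and b: "norm (c1^2 + 2 * c2) \<le> 1"
  defines "\<Delta> \<equiv> (1 - 4 * (norm c1)^2)^2 - (norm (c1^2 + 2 * c2))^2"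
  shows "-1 \<le> \<Delta>" and "\<Delta> \<le> 8"
proof -
  define t where "t = (norm c1)^2"
  have t: "0 \<le> t" "t \<le> 1" using c1 by (auto simp: t_def power_le_one)
  have "(norm (c1^2 + 2 * c2))^2 \<le> 1" using b by (simp add: power_le_one)
  then show "-1 \<le> \<Delta>" unfolding \<Delta>_def by (smt (verit) zero_le_power2)
  have "t \<le> norm (c1^2 + 2 * c2) + 2 * norm c2"
    using norm_triangle_ineq4[of "c1^2 + 2 * c2" "2 * c2"] by (simp add: t_def norm_power norm_mult)
  then have lower: "3 * t - 2 \<le> norm (c1^2 + 2 * c2)" using c2 by (simp add: t_def)
  show "\<Delta> \<le> 8"
  proof (cases "3 * t \<ge> 2")
    case True
    then have "(3 * t - 2)^2 \<le> (norm (c1^2 + 2 * c2))^2" using lower by (intro power_mono) auto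
    moreover have "(1 - 4 * t)^2 - (3 * t - 2)^2 \<le> 8"
      using t mult_mono[of t 1 t 1] by (simp add: power2_eq_square algebra_simps)
    ultimately show ?thesis unfolding \<Delta>_def t_def by linarith
  next
    case False
    then have "(1 - 4 * t)^2 \<le> 8"
      using t mult_left_mono[of t "2/3" t] by (simp add: power2_eq_square algebra_simps)
    then show ?thesis unfolding \<Delta>_def t_def by (smt (verit) zero_le_power2)
  qed
qed

lemma classUs1_detT31_bounds:
  assumes "classUs1 f"
  shows "-1 \<le> detT31 f \<and> detT31 f \<le> 8"
proof -
  obtain c1 c2 where c: "norm c1 \<le> 1" "norm c2 \<le> 1 - (norm c1)^2" "norm (c1^2 + 2 * c2) \<le> 1"
    and a2: "coeff f 2 = -2 * c1" and a3: "coeff f 3 = 3 * c1^2 - 2 * c2"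
    using classUs1_coeffs[OF assms] by blast
  have "detT31 f = (1 - 4 * (norm c1)^2)^2 - (norm (c1^2 + 2 * c2))^2"
    unfolding detT31_eq a2 a3 by (simp add: norm_mult power_mult_distrib algebra_simps power2_eq_square)
  then show ?thesis using detT31_bounds_Schwarz_coeffs[OF c] by simp
qed

lemma classU1_ident_div_quadratic:
  fixes \<beta> \<gamma> :: complex
  assumes nz: "\<And>z. norm z < 1 \<Longrightarrow> 1 + \<beta> * z + \<gamma> * z^2 \<noteq> 0" and \<gamma>: "norm \<gamma> \<le> 1"
  defines "f \<equiv> \<lambda>z. z / (1 + \<beta> * z + \<gamma> * z^2)"
  shows "classU1 f" and "coeff f 2 = - \<beta>" and "coeff f 3 = \<beta>^2 - \<gamma>"
proof -
  define g where "g z = 1 + \<beta> * z + \<gamma> * z^2" for z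
  have holg: "g holomorphic_on ball 0 1" unfolding g_def by (auto intro!: holomorphic_intros)
  have nz': "\<And>z. z \<in> ball 0 1 \<Longrightarrow> g z \<noteq> 0" using nz by (simp add: g_def)
  have fg: "\<And>z. z \<in> ball 0 1 \<Longrightarrow> f z = z / g z" by (simp add: f_def g_def)
  have dg: "deriv g z = \<beta> + 2 * \<gamma> * z" for z unfolding g_def
    by (rule DERIV_imp_deriv) (auto intro!: derivative_eq_intros)
  have "(deriv ^^ 2) g 0 = deriv (\<lambda>z. \<beta> + 2 * \<gamma> * z) 0" by (simp add: numeral_2_eq_2 dg[abs_def])
  also have "\<dots> = 2 * \<gamma>" by (rule DERIV_imp_deriv) (auto intro!: derivative_eq_intros)
  finally have d2g: "(deriv ^^ 2) g 0 = 2 * \<gamma>" .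
  have g0: "g 0 = 1" by (simp add: g_def)
  have coeffs: "coeff f 2 = - deriv g 0" "coeff f 3 = (deriv g 0)^2 - (deriv ^^ 2) g 0 / 2"
    using coeff_ident_div[of g "ball 0 1" f] holg nz' g0 fg by auto
  show "coeff f 2 = - \<beta>" using coeffs(1) by (simp add: dg)
  show "coeff f 3 = \<beta>^2 - \<gamma>" using coeffs(2) by (simp add: dg d2g)
  show "classU1 f"
    unfolding classU1_def classA_def
  proof (intro conjI ballI impI)
    show "f holomorphic_on ball 0 1" unfolding f_def using nz by (auto intro!: holomorphic_intros)
    show "f 0 = 0" by (simp add: f_def)
    show "deriv f 0 = 1" unfolding f_def
      by (rule DERIV_imp_deriv) (auto intro!: derivative_eq_intros)
    fix z :: complex assume z: "z \<in> ball 0 1" and z0: "z \<noteq> 0"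
    show "f z \<noteq> 0" using nz'[OF z] z0 by (simp add: fg[OF z])
    have "(z / f z)^2 * deriv f z - 1 = g z - z * deriv g z - 1"
      by (rule U1_expression_reciprocal[OF holg open_ball nz' fg z z0])
    also have "\<dots> = - \<gamma> * z^2" by (simp add: g_def dg power2_eq_square algebra_simps)
    finally have "norm ((z / f z)^2 * deriv f z - 1) = norm \<gamma> * (norm z)^2"
      by (simp add: norm_mult norm_power)
    also have "\<dots> \<le> (norm z)^2" using \<gamma> by (simp add: mult_left_le_one_le)
    also have "\<dots> < 1" using z by (simp add: power_less_one_iff)
    finally show "norm ((z / f z)^2 * deriv f z - 1) < 1" .
  qed
qed

lemma classU1_detT21_lower_sharp:
  shows "classU1 (\<lambda>z. z / (1 - z)^2)" and "detT21 (\<lambda>z. z / (1 - z)^2) = -3"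
proof -
  have eq: "(\<lambda>z::complex. z / (1 - z)^2) = (\<lambda>z. z / (1 + (-2) * z + 1 * z^2))"
    by (simp add: power2_eq_square algebra_simps)
  have "1 + (-2) * z + 1 * z^2 \<noteq> 0" if "norm z < 1" for z :: complex
  proof
    assume "1 + (-2) * z + 1 * z^2 = 0"
    then have "(1 - z)^2 = 0" by (simp add: power2_eq_square algebra_simps)
    then show False using that by simp
  qed
  note K = classU1_ident_div_quadratic[OF this, unfolded eq[symmetric]]
  show "classU1 (\<lambda>z. z / (1 - z)^2)" using K(1) by simp
  show "detT21 (\<lambda>z. z / (1 - z)^2) = -3" using K(2) by (simp add: detT21_def)
qed

lemma classU1_detT21_upper_sharp:
  shows "classU1 (\<lambda>z. z)" and "detT21 (\<lambda>z. z) = 1"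
  using classU1_ident_div_quadratic[of 0 0] by (simp_all add: detT21_def)

lemma classUs1_detT31_upper_sharp:
  shows "classUs1 (\<lambda>z. z / (1 + z)^2)" and "detT31 (\<lambda>z. z / (1 + z)^2) = 8"
proof -
  have eq: "(\<lambda>z::complex. z / (1 + z)^2) = (\<lambda>z. z / (1 + 2 * z + 1 * z^2))"
    by (simp add: power2_eq_square algebra_simps)
  have "1 + 2 * z + 1 * z^2 \<noteq> 0" if "norm z < 1" for z :: complex
  proof
    assume "1 + 2 * z + 1 * z^2 = 0"
    then have "(1 + z)^2 = 0" by (simp add: power2_eq_square algebra_simps)
    then show False using that by (auto simp: add_eq_0_iff)
  qed
  note K = classU1_ident_div_quadratic[OF this, unfolded eq[symmetric]]
  have "quot (\<lambda>z. z / (1 + z)^2) z = 1 / (1 + z)^2" for z :: complex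
    by (simp add: quot_def)
  then show "classUs1 (\<lambda>z. z / (1 + z)^2)"
    unfolding classUs1_def subordinate_def using K(1) by (intro conjI exI[of _ "\<lambda>z. z"]) auto
  show "detT31 (\<lambda>z. z / (1 + z)^2) = 8" using K(2,3) by (simp add: detT31_def)
qed

lemma one_minus_z_plus_z2_notin_nonpos_Reals:
  fixes z :: complex
  assumes z: "norm z < 1"
  shows "1 - z + z^2 \<notin> \<real>\<^sub>\<le>\<^sub>0"
proof
  define x y where "x = Re z" and "y = Im z"
  have e: "1 - z + z^2 = Complex (1 - x + x*x - y*y) (y * (2*x - 1))"
    by (simp add: x_def y_def power2_eq_square complex_eq_iff algebra_simps)
  assume "1 - z + z^2 \<in> \<real>\<^sub>\<le>\<^sub>0"
  then have im: "y * (2*x - 1) = 0" and re: "1 - x + x*x - y*y \<le> 0"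
    unfolding e complex_nonpos_Reals_iff by auto
  have n: "x*x + y*y < 1" using z by (simp add: cmod_def x_def y_def power2_eq_square)
  from im have "y = 0 \<or> x = 1/2" by auto
  then show False
  proof
    assume "y = 0"
    with re have "1 - x + x*x \<le> 0" by simp
    moreover have "1 - x + x*x = (x - 1/2)*(x - 1/2) + 3/4" by (simp add: algebra_simps)
    moreover have "(x - 1/2)*(x - 1/2) \<ge> 0" by simp
    ultimately show False by linarith
  next
    assume x: "x = 1/2"
    have "3/4 \<le> y*y" "y*y < 3/4" using re n unfolding x by simp_all
    then show False by linarith
  qed
qed

lemma norm_csqrt_one_minus_z_plus_z2_minus_1:
  fixes z :: complex
  assumes z: "norm z < 1"
  shows "norm (csqrt (1 - z + z^2) - 1) < 1"
proof -
  define h where "h = csqrt (1 - z + z^2)"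
  have h2: "h^2 = 1 - z + z^2" by (simp add: h_def)
  have Re_pos: "Re h > 0"
  proof (rule ccontr)
    assume "\<not> Re h > 0"
    then have "Re h = 0" using csqrt_principal[of "1 - z + z^2"] by (auto simp: h_def)
    then have "h = Complex 0 (Im h)" by (simp add: complex_eq_iff)
    then have "h^2 = Complex (- (Im h * Im h)) 0" by (simp add: power2_eq_square complex_eq_iff)
    then have "h^2 \<in> \<real>\<^sub>\<le>\<^sub>0" by (simp add: complex_nonpos_Reals_iff)
    then show False using one_minus_z_plus_z2_notin_nonpos_Reals[OF z] h2 by simp
  qed
  have "(z - 1)^2 = (1 - z + z^2) - z" by (simp add: power2_eq_square algebra_simps)
  then have "(norm (z - 1))^2 \<le> norm (1 - z + z^2) + norm z"
    using norm_triangle_ineq4[of "1 - z + z^2" z] by (simp add: norm_power[symmetric])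
  also have "\<dots> < (norm h)^2 + 2 * Re h + 1"
    using z Re_pos by (simp add: norm_power[symmetric] h2)
  also have "\<dots> = (norm (h + 1))^2"
    by (simp only: cmod_power2) (simp add: power2_eq_square algebra_simps)
  finally have lt: "norm (z - 1) < norm (h + 1)" by (rule power2_less_imp_less) simp
  have "(h - 1) * (h + 1) = z * (z - 1)" using h2 by (simp add: power2_eq_square algebra_simps)
  then have "norm (h - 1) * norm (h + 1) = norm z * norm (z - 1)" by (metis norm_mult)
  also have "\<dots> \<le> norm (z - 1)" using z by (simp add: mult_left_le_one_le)
  finally have "norm (h - 1) * norm (h + 1) < 1 * norm (h + 1)" using lt by simp
  then have "norm (h - 1) < 1" by (rule mult_right_less_imp_less) simp
  then show ?thesis by (simp add: h_def)
qed

lemma classUs1_detT31_lower_sharp: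
  shows "classUs1 (\<lambda>z. z / (1 - z + z^2))" and "detT31 (\<lambda>z. z / (1 - z + z^2)) = -1"
proof -
  have eq: "(\<lambda>z::complex. z / (1 - z + z^2)) = (\<lambda>z. z / (1 + (-1) * z + 1 * z^2))" by simp
  have "1 + (-1) * z + 1 * z^2 \<noteq> 0" if "norm z < 1" for z :: complex
    using one_minus_z_plus_z2_notin_nonpos_Reals[OF that] by auto
  note K = classU1_ident_div_quadratic[OF this, unfolded eq[symmetric]]
  define w where "w z = csqrt (1 - z + z^2) - 1" for z
  have "w holomorphic_on ball 0 1"
    unfolding w_def using one_minus_z_plus_z2_notin_nonpos_Reals by (auto intro!: holomorphic_intros)
  moreover have "w ` ball 0 1 \<subseteq> ball 0 1"
    using norm_csqrt_one_minus_z_plus_z2_minus_1 by (auto simp: w_def)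
  moreover have "quot (\<lambda>z. z / (1 - z + z^2)) z = 1 / (1 + w z)^2" for z
    by (simp add: quot_def w_def)
  ultimately show "classUs1 (\<lambda>z. z / (1 - z + z^2))"
    unfolding classUs1_def subordinate_def using K(1) by (intro conjI exI[of _ w]) (auto simp: w_def)
  show "detT31 (\<lambda>z. z / (1 - z + z^2)) = -1" using K(2,3) by (simp add: detT31_def)
qed

theorem mainTheorem3:
  shows "(\<forall>f. classU1 f \<longrightarrow> -3 \<le> detT21 f \<and> detT21 f \<le> 1)
       \<and> (\<exists>f. classU1 f \<and> detT21 f = -3)
       \<and> (\<exists>f. classU1 f \<and> detT21 f = 1)
       \<and> (\<forall>f. classUs1 f \<longrightarrow> -1 \<le> detT31 f \<and> detT31 f \<le> 8)
       \<and> (\<exists>f. classUs1 f \<and> detT31 f = -1)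
       \<and> (\<exists>f. classUs1 f \<and> detT31 f = 8)"
proof (intro conjI)
  show "\<forall>f. classU1 f \<longrightarrow> -3 \<le> detT21 f \<and> detT21 f \<le> 1"
    using classU1_detT21_bounds by blast
  show "\<exists>f. classU1 f \<and> detT21 f = -3" using classU1_detT21_lower_sharp by blast
  show "\<exists>f. classU1 f \<and> detT21 f = 1" using classU1_detT21_upper_sharp by blast
  show "\<forall>f. classUs1 f \<longrightarrow> -1 \<le> detT31 f \<and> detT31 f \<le> 8"
    using classUs1_detT31_bounds by blast
  show "\<exists>f. classUs1 f \<and> detT31 f = -1" using classUs1_detT31_lower_sharp by blast
  show "\<exists>f. classUs1 f \<and> detT31 f = 8" using classUs1_detT31_upper_sharp by blast
qed

end
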